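(* Let $J$ be an ideal of $\widetilde{\mathbb{K}}_{sm}$ and $x\in J$. Then $|x|\in J$.
   Context: Let $I=(0,1]$ and $\mathbb{K}\in\{\mathbb{R},\mathbb{C}\}$. $\widetilde{\mathbb{K}}_{sm}=\mathcal{E}_{M,sm}/\mathcal{N}_{sm}$ where $\mathcal{E}_{M,sm}$ is the set of nets $(r_\varepsilon)_{\varepsilon\in I}\in\mathbb{K}^I$ smooth in $\varepsilon$ with $|r_\varepsilon|=O(\varepsilon^{-N})$ for some $N$, and $\mathcal{N}_{sm}$ those with $|r_\varepsilon|=O(\varepsilon^m)$ for all $m$; $\widetilde{\mathbb{K}}_{co}$ is defined analogously with continuous nets, and $\tau_{sm}:\widetilde{\mathbb{K}}_{sm}\to\widetilde{\mathbb{K}}_{co}$, $[(r_\varepsilon)]\mapsto[(r_\varepsilon)]$, is a ring isomorphism. For $x=[(x_\varepsilon)_\varepsilon]\in\widetilde{\mathbb{K}}_{sm}$, $|x|:=\tau_{sm}^{-1}([(|x_\varepsilon|)_\varepsilon])$. *)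

theory Defs
  imports "HOL-Analysis.Analysis" "HOL-Algebra.Ideal"
begin

text \<open>Nets are functions real => 'a; only their values on I = (0,1] matter.
  The scalar field K is a real normed field (by Gelfand-Mazur/Ostrowski these are exactly R and C).\<close>

definition I_eps :: "real set" where "I_eps = {0<..1}"

definition smooth_net :: "(real \<Rightarrow> 'a::real_normed_vector) \<Rightarrow> bool" where
  "smooth_net r \<longleftrightarrow> (\<exists>D :: nat \<Rightarrow> real \<Rightarrow> 'a.
      (\<forall>t\<in>I_eps. D 0 t = r t) \<and>
      (\<forall>k. \<forall>t\<in>I_eps. (D k has_vector_derivative D (Suc k) t) (at t within I_eps)))"

definition moderate_net :: "(real \<Rightarrow> 'a::real_normed_vector) \<Rightarrow> bool" where
  "moderate_net r \<longleftrightarrow> (\<exists>N::nat. \<exists>C. \<exists>e0>0. \<forall>e\<in>{0<..e0}. e \<le> 1 \<longrightarrow> norm (r e) \<le> C * (1 / e) ^ N)"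

definition negligible_net :: "(real \<Rightarrow> 'a::real_normed_vector) \<Rightarrow> bool" where
  "negligible_net r \<longleftrightarrow> (\<forall>m::nat. \<exists>C. \<exists>e0>0. \<forall>e\<in>{0<..e0}. e \<le> 1 \<longrightarrow> norm (r e) \<le> C * e ^ m)"

definition EM_sm :: "(real \<Rightarrow> 'a::real_normed_field) set" where
  "EM_sm = {r. smooth_net r \<and> moderate_net r}"

definition EM_co :: "(real \<Rightarrow> 'a::real_normed_field) set" where
  "EM_co = {r. continuous_on I_eps r \<and> moderate_net r}"

definition rel_sm :: "((real \<Rightarrow> 'a::real_normed_field) \<times> (real \<Rightarrow> 'a)) set" where
  "rel_sm = {(r, s). r \<in> EM_sm \<and> s \<in> EM_sm \<and> negligible_net (\<lambda>e. r e - s e)}"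

definition rel_co :: "((real \<Rightarrow> 'a::real_normed_field) \<times> (real \<Rightarrow> 'a)) set" where
  "rel_co = {(r, s). r \<in> EM_co \<and> s \<in> EM_co \<and> negligible_net (\<lambda>e. r e - s e)}"

definition cls_sm :: "(real \<Rightarrow> 'a::real_normed_field) \<Rightarrow> (real \<Rightarrow> 'a) set" where
  "cls_sm r = rel_sm `` {r}"

definition cls_co :: "(real \<Rightarrow> 'a::real_normed_field) \<Rightarrow> (real \<Rightarrow> 'a) set" where
  "cls_co r = rel_co `` {r}"

definition rep :: "(real \<Rightarrow> 'a) set \<Rightarrow> real \<Rightarrow> 'a" where
  "rep X = (SOME r. r \<in> X)"

definition Ksm :: "(real \<Rightarrow> 'a::real_normed_field) set ring" where
  "Ksm = \<lparr> carrier = EM_sm // rel_sm,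
           mult = (\<lambda>X Y. cls_sm (\<lambda>e. rep X e * rep Y e)),
           one = cls_sm (\<lambda>_. 1),
           zero = cls_sm (\<lambda>_. 0),
           add = (\<lambda>X Y. cls_sm (\<lambda>e. rep X e + rep Y e)) \<rparr>"

definition tau_sm :: "(real \<Rightarrow> 'a::real_normed_field) set \<Rightarrow> (real \<Rightarrow> 'a) set" where
  "tau_sm X = cls_co (rep X)"

definition abs_sm :: "(real \<Rightarrow> 'a::real_normed_field) set \<Rightarrow> (real \<Rightarrow> 'a) set" where
  "abs_sm x = (THE y. y \<in> carrier Ksm \<and> tau_sm y = cls_co (\<lambda>e. of_real (norm (rep x e))))"

end

theory Submission
  imports Defs "HOL-Computational_Algebra.Polynomial"
begin

text \<open>If \<open>r\<close> represents \<open>x\<close>, it suffices to find a smooth moderate net \<open>z\<close> such that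
  \<open>r z - |r|\<close> is negligible: then \<open>|x| = x [z]\<close> lies in the ideal. Such a \<open>z\<close> is a smoothed
  inverse sign of \<open>r\<close>. Choose knots \<open>1 = t\<^sub>0 > t\<^sub>1 > ... \<longrightarrow> 0\<close> so close together that
  \<open>r\<close> oscillates by at most \<open>exp (-2/t\<^sub>n)\<close> on \<open>[t\<^sub>n\<^sub>+\<^sub>1, t\<^sub>n]\<close> while \<open>t\<^sub>n\<^sub>+\<^sub>1 \<ge> t\<^sub>n/2\<close>,
  and let \<open>z\<close> pass from \<open>1/sgn r(t\<^sub>n)\<close> to \<open>1/sgn r(t\<^sub>n\<^sub>+\<^sub>1)\<close> along a \<open>C\<^sup>\<infinity>\<close> step function on that
  segment. Then \<open>|z| \<le> 1\<close> and \<open>|r z - |r|| \<le> 2 exp (-1/\<epsilon>)\<close>, which is negligible.\<close>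

lemma power_div_fact_le_exp:
  fixes x :: real
  assumes "0 \<le> x"
  shows "x ^ k / fact k \<le> exp x"
proof -
  obtain t where t: "exp x = (\<Sum>m<Suc k. x ^ m / fact m) + exp t / fact (Suc k) * x ^ Suc k"
    using Maclaurin_exp_le[of x "Suc k"] by blast
  have "x ^ k / fact k \<le> (\<Sum>m<Suc k. x ^ m / fact m)"
    using assms by (intro member_le_sum) auto
  moreover have "0 \<le> exp t / fact (Suc k) * x ^ Suc k"
    using assms by simp
  ultimately show ?thesis
    using t by linarith
qed

lemma exp_neg_inverse_le_power:
  fixes u :: real
  assumes "0 < u"
  shows "exp (- 1 / u) \<le> fact m * u ^ m"
proof -
  have "(1 / u) ^ m / fact m \<le> exp (1 / u)"
    using assms by (intro power_div_fact_le_exp) simp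
  then have "1 / exp (1 / u) \<le> fact m * u ^ m"
    using assms by (simp add: field_simps power_one_over)
  then show ?thesis
    by (simp add: exp_minus divide_inverse)
qed

lemma exp_neg_inverse_mono:
  fixes a b :: real
  assumes "0 < a" "a \<le> b"
  shows "exp (- 1 / a) \<le> exp (- 1 / b)"
  using assms by (simp add: frac_le)

lemma has_real_derivative_zero_if_le_square:
  fixes f :: "real \<Rightarrow> real"
  assumes "\<And>t. \<bar>f t\<bar> \<le> K * (t - a)\<^sup>2"
  shows "(f has_real_derivative 0) (at a)"
proof -
  have fa: "f a = 0"
    using assms[of a] by simp
  have "\<forall>\<^sub>F y in at a. norm ((f y - f a) / (y - a)) \<le> \<bar>K\<bar> * \<bar>y - a\<bar>"
  proof (rule eventually_at_filter[THEN iffD2], rule always_eventually, intro allI impI)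
    fix y
    assume "y \<noteq> a"
    have "\<bar>f y\<bar> \<le> K * (y - a)\<^sup>2"
      by (rule assms)
    also have "\<dots> \<le> \<bar>K\<bar> * (y - a)\<^sup>2"
      by (intro mult_right_mono) auto
    also have "\<dots> = \<bar>K\<bar> * \<bar>y - a\<bar> * \<bar>y - a\<bar>"
      by (simp add: power2_eq_square abs_mult_self_eq)
    finally have "\<bar>f y\<bar> \<le> \<bar>K\<bar> * \<bar>y - a\<bar> * \<bar>y - a\<bar>" .
    then show "norm ((f y - f a) / (y - a)) \<le> \<bar>K\<bar> * \<bar>y - a\<bar>"
      using \<open>y \<noteq> a\<close> fa by (simp add: divide_le_eq abs_divide)
  qed
  moreover have "((\<lambda>y. \<bar>K\<bar> * \<bar>y - a\<bar>) \<longlongrightarrow> 0) (at a)"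
    by (intro tendsto_eq_intros) auto
  ultimately have "((\<lambda>y. (f y - f a) / (y - a)) \<longlongrightarrow> 0) (at a)"
    by (rule Lim_null_comparison)
  then show ?thesis
    by (simp add: has_field_derivative_iff)
qed

section \<open>A smooth step function\<close>

definition bump_base :: "real \<Rightarrow> real" where "bump_base s = s - s\<^sup>2"

definition bump_term :: "real poly \<Rightarrow> nat \<Rightarrow> real \<Rightarrow> real" where
  "bump_term P n s =
     (if 0 < s \<and> s < 1 then poly P s * exp (- 1 / bump_base s) / bump_base s ^ n else 0)"

text \<open>With \<open>w = s - s\<^sup>2\<close>, the derivative of \<open>P e\<^sup>-\<^sup>1\<^sup>/\<^sup>w / w\<^sup>n\<close> is
  \<open>(P' w\<^sup>2 - n P w' w + P w') e\<^sup>-\<^sup>1\<^sup>/\<^sup>w / w\<^sup>n\<^sup>+\<^sup>2\<close>, and \<open>w' = 1 - 2 s\<close>.\<close>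

definition bump_term_deriv_poly :: "real poly \<Rightarrow> nat \<Rightarrow> real poly" where
  "bump_term_deriv_poly P n =
     pderiv P * [:0, 1, -1:]\<^sup>2 - smult (of_nat n) (P * [:1, -2:] * [:0, 1, -1:]) + P * [:1, -2:]"

lemma poly_bump_term_deriv_poly:
  "poly (bump_term_deriv_poly P n) s =
     poly (pderiv P) s * (bump_base s)\<^sup>2 - real n * poly P s * (1 - 2 * s) * bump_base s
     + poly P s * (1 - 2 * s)"
  by (simp add: bump_term_deriv_poly_def bump_base_def algebra_simps power2_eq_square)

lemma bump_base_pos: "0 < s \<Longrightarrow> s < 1 \<Longrightarrow> 0 < bump_base s"
  by (simp add: bump_base_def power2_eq_square algebra_simps)

lemma has_real_derivative_bump_term_inside:
  assumes "0 < s" "s < 1"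
  shows "((\<lambda>s. poly P s * exp (- 1 / bump_base s) / bump_base s ^ n) has_real_derivative
          poly (bump_term_deriv_poly P n) s * exp (- 1 / bump_base s) / bump_base s ^ (n + 2)) (at s)"
proof -
  have w: "bump_base s > 0" using assms by (rule bump_base_pos)
  have base: "(bump_base has_real_derivative 1 - 2 * s) (at s)"
    unfolding bump_base_def by (auto intro!: derivative_eq_intros)
  show ?thesis
    using w by (auto intro!: derivative_eq_intros base)
      (cases n; auto simp: poly_bump_term_deriv_poly field_simps power2_eq_square)
qed

lemma bump_term_le_square:
  "\<exists>K. \<forall>s. \<bar>bump_term P n s\<bar> \<le> K * s\<^sup>2 \<and> \<bar>bump_term P n s\<bar> \<le> K * (s - 1)\<^sup>2"
proof -
  have "compact (poly P ` {0..1})"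
    by (intro compact_continuous_image continuous_intros) auto
  then obtain M where M: "\<And>s. s \<in> {0..1} \<Longrightarrow> \<bar>poly P s\<bar> \<le> M"
    using compact_imp_bounded[THEN bounded_pos[THEN iffD1]] by force
  have M0: "0 \<le> M"
    using M[of 0] by simp
  define K where "K = M * fact (n + 2)"
  have "\<bar>bump_term P n s\<bar> \<le> K * s\<^sup>2 \<and> \<bar>bump_term P n s\<bar> \<le> K * (s - 1)\<^sup>2" for s
  proof (cases "0 < s \<and> s < 1")
    case True
    let ?w = "bump_base s"
    have w: "0 < ?w"
      using True by (simp add: bump_base_pos)
    have "\<bar>bump_term P n s\<bar> = \<bar>poly P s\<bar> * exp (- 1 / ?w) / ?w ^ n"
      using True w by (simp add: bump_term_def abs_mult)
    also have "\<dots> \<le> M * (fact (n + 2) * ?w ^ (n + 2)) / ?w ^ n"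
      using w M[of s] True exp_neg_inverse_le_power[OF w, of "n + 2"]
      by (intro divide_right_mono mult_mono) auto
    also have "\<dots> = K * ?w\<^sup>2"
      using w by (simp add: K_def power_add power2_eq_square)
    finally have bound: "\<bar>bump_term P n s\<bar> \<le> K * ?w\<^sup>2" .
    have "?w \<le> s" "?w \<le> 1 - s"
      using True zero_le_power2[of "1 - s"] by (auto simp: bump_base_def power2_eq_square algebra_simps)
    then have "?w\<^sup>2 \<le> s\<^sup>2" "?w\<^sup>2 \<le> (s - 1)\<^sup>2"
      using w by (auto intro!: power_mono simp: power2_commute[of s 1])
    moreover have "0 \<le> K"
      using M0 by (simp add: K_def)
    ultimately show ?thesis
      using bound by (meson mult_left_mono order_trans)
  next
    case False
    then have "bump_term P n s = 0"
      by (auto simp: bump_term_def)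
    then show ?thesis
      using M0 by (simp add: K_def)
  qed
  then show ?thesis by blast
qed

lemma has_real_derivative_bump_term:
  "(bump_term P n has_real_derivative bump_term (bump_term_deriv_poly P n) (n + 2) s) (at s)"
proof -
  consider "0 < s \<and> s < 1" | "s < 0 \<or> 1 < s" | "s = 0 \<or> s = 1"
    by linarith
  then show ?thesis
  proof cases
    case 1
    have "(bump_term P n has_real_derivative
        poly (bump_term_deriv_poly P n) s * exp (- 1 / bump_base s) / bump_base s ^ (n + 2)) (at s)"
      by (rule has_field_derivative_transform_within_open
          [OF has_real_derivative_bump_term_inside, where S = "{0<..<1}"])
        (use 1 in \<open>auto simp: bump_term_def\<close>)
    then show ?thesis
      using 1 by (simp add: bump_term_def)
  next
    case 2
    have "((\<lambda>_. 0) has_real_derivative 0) (at s)"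
      by simp
    then have "(bump_term P n has_real_derivative 0) (at s)"
      by (rule has_field_derivative_transform_within_open[where S = "{..<0} \<union> {1<..}"])
        (use 2 in \<open>auto simp: bump_term_def\<close>)
    then show ?thesis
      using 2 by (auto simp: bump_term_def)
  next
    case 3
    obtain K where K: "\<And>t. \<bar>bump_term P n t\<bar> \<le> K * t\<^sup>2 \<and> \<bar>bump_term P n t\<bar> \<le> K * (t - 1)\<^sup>2"
      using bump_term_le_square by blast
    have "(bump_term P n has_real_derivative 0) (at s)"
      using 3 K by (auto intro: has_real_derivative_zero_if_le_square[of _ K])
    then show ?thesis
      using 3 by (auto simp: bump_term_def)
  qed
qed

primrec bump_data :: "nat \<Rightarrow> real poly \<times> nat" where
  "bump_data 0 = (1, 0)"
| "bump_data (Suc k) = (bump_term_deriv_poly (fst (bump_data k)) (snd (bump_data k)), snd (bump_data k) + 2)"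

definition bump :: "nat \<Rightarrow> real \<Rightarrow> real" where
  "bump k = bump_term (fst (bump_data k)) (snd (bump_data k))"

lemma has_real_derivative_bump: "(bump k has_real_derivative bump (Suc k) s) (at s)"
  using has_real_derivative_bump_term by (simp add: bump_def)

lemma bump_outside: "s \<le> 0 \<or> 1 \<le> s \<Longrightarrow> bump k s = 0"
  by (auto simp: bump_def bump_term_def)

lemma bump_0: "bump 0 s = (if 0 < s \<and> s < 1 then exp (- 1 / bump_base s) else 0)"
  by (simp add: bump_def bump_term_def)

lemma bump_0_nonneg: "0 \<le> bump 0 s"
  by (simp add: bump_0)

lemma bump_0_ge: "s \<in> {1/4..3/4} \<Longrightarrow> exp (- 6) \<le> bump 0 s"
proof -
  assume s: "s \<in> {1/4..3/4}"
  have "0 \<le> (s - 1/4) * (3/4 - s)"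
    using s by (intro mult_nonneg_nonneg) auto
  also have "(s - 1/4) * (3/4 - s) = bump_base s - 3/16"
    by (simp add: bump_base_def power2_eq_square field_simps)
  finally have "3/16 \<le> bump_base s"
    by simp
  then have "- 6 \<le> - 1 / bump_base s"
    by (simp add: field_simps)
  then show ?thesis
    using s by (simp add: bump_0)
qed

lemma continuous_on_bump: "continuous_on A (bump k)"
  using has_real_derivative_bump DERIV_isCont continuous_at_imp_continuous_on by blast

lemma bump_integrable: "bump k integrable_on {a..b}"
  by (rule integrable_continuous_real[OF continuous_on_bump])

lemma integral_bump_0_outside:
  "{a..b} \<subseteq> {..0} \<union> {1..} \<Longrightarrow> integral {a..b} (bump 0) = 0"
  by (subst integral_cong[where g = "\<lambda>_. 0"]) (auto intro: bump_outside)

definition bump_mass :: real where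
  "bump_mass = integral {0..1} (bump 0)"

lemma bump_mass_pos: "0 < bump_mass"
proof -
  have left: "0 \<le> integral {0..1/4} (bump 0)" and right: "0 \<le> integral {3/4..1} (bump 0)"
    by (intro integral_nonneg bump_integrable bump_0_nonneg)+
  have "integral {1/4..3/4::real} (\<lambda>_. exp (- 6)) \<le> integral {1/4..3/4} (bump 0)"
    by (rule integral_le) (auto intro: bump_integrable bump_0_ge)
  then have middle: "exp (- 6) / 2 \<le> integral {1/4..3/4} (bump 0)"
    by simp
  have "bump_mass = integral {0..1/4} (bump 0) + integral {1/4..1} (bump 0)"
    unfolding bump_mass_def
    by (rule Henstock_Kurzweil_Integration.integral_combine[symmetric]) (auto intro: bump_integrable)
  also have "integral {1/4..1} (bump 0) = integral {1/4..3/4} (bump 0) + integral {3/4..1} (bump 0)"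
    by (rule Henstock_Kurzweil_Integration.integral_combine[symmetric]) (auto intro: bump_integrable)
  finally show ?thesis
    using left middle right exp_gt_zero[of "- 6"] by linarith
qed

definition smooth_step :: "real \<Rightarrow> real" where
  "smooth_step s = integral {-1..s} (bump 0) / bump_mass"

lemma smooth_step_nonpos: "t \<le> 0 \<Longrightarrow> smooth_step t = 0"
  unfolding smooth_step_def by (subst integral_bump_0_outside) auto

lemma smooth_step_ge_1: "1 \<le> t \<Longrightarrow> smooth_step t = 1"
proof -
  assume t: "1 \<le> t"
  have "integral {-1..t} (bump 0) = integral {-1..0} (bump 0) + integral {0..t} (bump 0)"
    using t by (intro Henstock_Kurzweil_Integration.integral_combine[symmetric]) (auto intro: bump_integrable)
  also have "integral {0..t} (bump 0) = bump_mass + integral {1..t} (bump 0)"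
    unfolding bump_mass_def
    using t by (intro Henstock_Kurzweil_Integration.integral_combine[symmetric]) (auto intro: bump_integrable)
  finally have "integral {-1..t} (bump 0) =
      integral {-1..0} (bump 0) + (bump_mass + integral {1..t} (bump 0))" .
  moreover have "integral {-1..0} (bump 0) = 0" "integral {1..t} (bump 0) = 0"
    using t by (auto intro!: integral_bump_0_outside)
  ultimately show ?thesis
    using bump_mass_pos by (simp add: smooth_step_def)
qed

lemma smooth_step_bounds: "0 \<le> smooth_step t \<and> smooth_step t \<le> 1"
proof (cases "t \<le> 0 \<or> 1 \<le> t")
  case True
  then show ?thesis
    using smooth_step_nonpos smooth_step_ge_1 by auto
next
  case False
  have "0 \<le> integral {-1..t} (bump 0)" "0 \<le> integral {t..1} (bump 0)"
    by (intro integral_nonneg bump_integrable bump_0_nonneg)+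
  moreover have "integral {-1..t} (bump 0) + integral {t..1} (bump 0) = integral {-1..1} (bump 0)"
    using False by (intro Henstock_Kurzweil_Integration.integral_combine bump_integrable) auto
  moreover have "integral {-1..1} (bump 0) = bump_mass"
    using smooth_step_ge_1[of 1] bump_mass_pos by (simp add: smooth_step_def)
  ultimately show ?thesis
    using bump_mass_pos by (simp add: smooth_step_def divide_le_eq)
qed

lemma has_real_derivative_smooth_step: "(smooth_step has_real_derivative bump 0 s / bump_mass) (at s)"
proof (cases "s < 0")
  case True
  have "((\<lambda>_. 0) has_real_derivative 0) (at s)"
    by simp
  then have "(smooth_step has_real_derivative 0) (at s)"
  proof (rule has_field_derivative_transform_within_open[where S = "{..<0}"])
    show "\<And>x. x \<in> {..<0} \<Longrightarrow> 0 = smooth_step x"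
      by (simp add: smooth_step_nonpos)
  qed (use True in auto)
  moreover have "bump 0 s = 0"
    using True by (simp add: bump_outside)
  ultimately show ?thesis
    by simp
next
  case False
  have "((\<lambda>x. integral {-1..x} (bump 0)) has_real_derivative bump 0 s) (at s within {-1..s + 1})"
    using False by (intro integral_has_real_derivative continuous_on_bump) auto
  moreover have "s \<in> interior {-1..s + 1}"
    using False by simp
  then have "at s within {-1..s + 1} = at s"
    by (rule at_within_interior)
  ultimately have "((\<lambda>x. integral {-1..x} (bump 0)) has_real_derivative bump 0 s) (at s)"
    by simp
  then show ?thesis
    unfolding smooth_step_def by (rule DERIV_cdivide)
qed

fun smooth_step_deriv :: "nat \<Rightarrow> real \<Rightarrow> real" where
  "smooth_step_deriv 0 = smooth_step"
| "smooth_step_deriv (Suc k) = (\<lambda>s. bump k s / bump_mass)"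

lemma has_real_derivative_smooth_step_deriv:
  "(smooth_step_deriv k has_real_derivative smooth_step_deriv (Suc k) s) (at s)"
proof (cases k)
  case 0
  then show ?thesis
    using has_real_derivative_smooth_step by simp
next
  case (Suc j)
  then show ?thesis
    using DERIV_cdivide[OF has_real_derivative_bump[of j s], of bump_mass] by simp
qed

lemma smooth_step_deriv_outside: "0 < k \<Longrightarrow> s \<le> 0 \<or> 1 \<le> s \<Longrightarrow> smooth_step_deriv k s = 0"
  by (cases k) (auto simp: bump_outside)

section \<open>A smooth approximation of the inverse sign of a smooth net\<close>

lemma norm_inverse_sgn_le: "norm (inverse (sgn w)) \<le> (1::real)"
  for w :: "'a::real_normed_field"
  by (simp add: norm_inverse norm_sgn)

lemma mult_inverse_sgn: "w * inverse (sgn w) = of_real (norm w)"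
  for w :: "'a::real_normed_field"
  by (cases "w = 0") (simp_all add: sgn_div_norm scaleR_conv_of_real field_simps)

lemma norm_mult_inverse_sgn_sub_norm_le:
  fixes v w :: "'a::real_normed_field"
  shows "norm (v * inverse (sgn w) - of_real (norm v)) \<le> 2 * norm (v - w)"
proof -
  have "v * inverse (sgn w) - of_real (norm v) =
      (v - w) * inverse (sgn w) + of_real (norm w - norm v)"
    by (simp add: algebra_simps mult_inverse_sgn)
  then have "norm (v * inverse (sgn w) - of_real (norm v)) \<le>
      norm (v - w) * norm (inverse (sgn w)) + \<bar>norm w - norm v\<bar>"
    by (metis norm_mult norm_of_real norm_triangle_ineq)
  also have "\<dots> \<le> norm (v - w) * 1 + norm (v - w)"
    using norm_inverse_sgn_le[of w] norm_triangle_ineq3[of w v]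
    by (intro add_mono mult_left_mono) (auto simp: norm_minus_commute)
  finally show ?thesis
    by simp
qed

lemma norm_convex_combination_le:
  fixes a b :: "'a::real_normed_vector"
  assumes "0 \<le> l" "l \<le> 1" "norm a \<le> M" "norm b \<le> M"
  shows "norm (l *\<^sub>R a + (1 - l) *\<^sub>R b) \<le> M"
proof -
  have "norm (l *\<^sub>R a + (1 - l) *\<^sub>R b) \<le> l * norm a + (1 - l) * norm b"
    using assms(1,2) norm_triangle_ineq[of "l *\<^sub>R a" "(1 - l) *\<^sub>R b"] by simp
  also have "\<dots> \<le> l * M + (1 - l) * M"
    using assms by (intro add_mono mult_left_mono) auto
  finally show ?thesis
    by (simp add: algebra_simps)
qed

locale smooth_derivs =
  fixes D :: "nat \<Rightarrow> real \<Rightarrow> 'a::real_normed_field"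
  assumes has_vector_derivative_D:
    "\<And>k t. t \<in> I_eps \<Longrightarrow> (D k has_vector_derivative D (Suc k) t) (at t within I_eps)"
begin

lemma continuous_on_D: "continuous_on I_eps (D k)"
  unfolding continuous_on_eq_continuous_within
  using has_vector_derivative_D has_vector_derivative_continuous by blast

lemma interval_subset_I_eps: "0 < a \<Longrightarrow> {a..1} \<subseteq> I_eps"
  by (auto simp: I_eps_def)

definition deriv_sup :: "real \<Rightarrow> real" where
  "deriv_sup a = Sup ((\<lambda>s. norm (D 1 s)) ` {a..1})"

lemma norm_D1_le_deriv_sup:
  assumes "0 < a" "s \<in> {a..1}"
  shows "norm (D 1 s) \<le> deriv_sup a"
proof -
  have "compact ((\<lambda>s. norm (D 1 s)) ` {a..1})"
    using assms(1) interval_subset_I_eps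
    by (intro compact_continuous_image continuous_on_norm continuous_on_subset[OF continuous_on_D])
      auto
  then have "bdd_above ((\<lambda>s. norm (D 1 s)) ` {a..1})"
    by (meson bounded_imp_bdd_above compact_imp_bounded)
  then show ?thesis
    unfolding deriv_sup_def using assms(2) by (auto intro: cSup_upper)
qed

lemma deriv_sup_nonneg: "0 < a \<Longrightarrow> a \<le> 1 \<Longrightarrow> 0 \<le> deriv_sup a"
  using norm_D1_le_deriv_sup[of a a] norm_ge_zero[of "D 1 a"]
  by (meson atLeastAtMost_iff order_refl order_trans)

lemma deriv_sup_antimono:
  assumes "0 < a" "a \<le> b" "b \<le> 1"
  shows "deriv_sup b \<le> deriv_sup a"
  unfolding deriv_sup_def[of b]
proof (rule cSup_least)
  show "(\<lambda>s. norm (D 1 s)) ` {b..1} \<noteq> {}"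
    using assms(3) by simp
  show "\<And>x. x \<in> (\<lambda>s. norm (D 1 s)) ` {b..1} \<Longrightarrow> x \<le> deriv_sup a"
    using assms norm_D1_le_deriv_sup[of a] by fastforce
qed

lemma norm_D0_diff_le:
  assumes "0 < a" "x \<in> {a..1}" "y \<in> {a..1}"
  shows "norm (D 0 x - D 0 y) \<le> deriv_sup a * \<bar>x - y\<bar>"
proof -
  have "norm (D 0 x - D 0 y) \<le> deriv_sup a * norm (x - y)"
  proof (rule differentiable_bound[where f' = "\<lambda>s h. h *\<^sub>R D 1 s"])
    fix s
    assume s: "s \<in> {a..1}"
    then have "(D 0 has_vector_derivative D 1 s) (at s within I_eps)"
      using has_vector_derivative_D[of s 0] interval_subset_I_eps[OF assms(1)] by auto
    then have "(D 0 has_vector_derivative D 1 s) (at s within {a..1})"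
      using interval_subset_I_eps[OF assms(1)] by (rule has_vector_derivative_within_subset)
    then show "(D 0 has_derivative (\<lambda>h. h *\<^sub>R D 1 s)) (at s within {a..1})"
      by (simp add: has_vector_derivative_def)
    have "onorm (\<lambda>h. h *\<^sub>R D 1 s) = norm (D 1 s)"
      using onorm_scaleR_left[of "\<lambda>h::real. h" "D 1 s"] by (simp add: onorm_id)
    then show "onorm (\<lambda>h. h *\<^sub>R D 1 s) \<le> deriv_sup a"
      using norm_D1_le_deriv_sup[OF assms(1) s] by simp
  qed (use assms in auto)
  then show ?thesis
    by simp
qed

definition knot_step :: "real \<Rightarrow> real" where
  "knot_step a = min a (exp (- 1 / a) / (deriv_sup a + 1))"

lemma knot_step_pos: "0 < a \<Longrightarrow> a \<le> 1 \<Longrightarrow> 0 < knot_step a"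
  using deriv_sup_nonneg[of a] by (simp add: knot_step_def add_nonneg_pos)

lemma knot_step_le: "knot_step a \<le> a"
  by (simp add: knot_step_def)

lemma knot_step_mono:
  assumes "0 < a" "a \<le> b" "b \<le> 1"
  shows "knot_step a \<le> knot_step b"
proof -
  have "exp (- 1 / a) / (deriv_sup a + 1) \<le> exp (- 1 / b) / (deriv_sup b + 1)"
    using assms exp_neg_inverse_mono[of a b] deriv_sup_antimono[of a b] deriv_sup_nonneg[of b]
    by (intro frac_le) auto
  then show ?thesis
    using assms(2) by (auto simp: knot_step_def)
qed

lemma mult_knot_step_le: "0 < a \<Longrightarrow> a \<le> 1 \<Longrightarrow> deriv_sup a * knot_step a \<le> exp (- 1 / a)"
proof -
  assume a: "0 < a" "a \<le> 1"
  have "deriv_sup a * knot_step a \<le> deriv_sup a * (exp (- 1 / a) / (deriv_sup a + 1))"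
    using deriv_sup_nonneg[OF a] by (intro mult_left_mono) (auto simp: knot_step_def)
  also have "\<dots> \<le> exp (- 1 / a)"
    using deriv_sup_nonneg[OF a] by (simp add: field_simps)
  finally show ?thesis .
qed

text \<open>The step after \<open>t\<^sub>n\<close> only depends on \<open>D\<close> on \<open>[t\<^sub>n/2, 1]\<close>; it keeps \<open>t\<^sub>n\<^sub>+\<^sub>1 \<ge> t\<^sub>n/2\<close> and
  makes the oscillation of \<open>D 0\<close> on \<open>[t\<^sub>n\<^sub>+\<^sub>1, t\<^sub>n]\<close> at most \<open>exp (-2/t\<^sub>n) \<le> exp (-1/\<epsilon>)\<close>.\<close>

primrec knot :: "nat \<Rightarrow> real" where
  "knot 0 = 1"
| "knot (Suc n) = knot n - knot_step (knot n / 2)"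

lemma knot_bounds: "0 < knot n \<and> knot n \<le> 1"
proof (induction n)
  case (Suc n)
  then show ?case
    using knot_step_pos[of "knot n / 2"] knot_step_le[of "knot n / 2"] by auto
qed simp

lemma knot_Suc_less: "knot (Suc n) < knot n"
  using knot_step_pos[of "knot n / 2"] knot_bounds[of n] by simp

lemma half_knot_le_knot_Suc: "knot n / 2 \<le> knot (Suc n)"
  using knot_step_le[of "knot n / 2"] by simp

lemma knot_antimono: "m \<le> n \<Longrightarrow> knot n \<le> knot m"
  by (induction n rule: dec_induct) (use knot_Suc_less order.strict_implies_order order_trans in blast)+

lemma ex_knot_less: "0 < e \<Longrightarrow> \<exists>n. knot n < e"
proof (rule ccontr)
  assume e: "0 < e" and "\<not> (\<exists>n. knot n < e)"
  then have above: "e \<le> knot n" for n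
    by (simp add: not_less)
  define \<delta> where "\<delta> = knot_step (e / 2)"
  have "e \<le> 1"
    using above[of 0] by simp
  then have \<delta>: "0 < \<delta>"
    using e by (simp add: \<delta>_def knot_step_pos)
  have linear_decrease: "knot n \<le> 1 - real n * \<delta>" for n
  proof (induction n)
    case (Suc n)
    have "\<delta> \<le> knot_step (knot n / 2)"
      using e above[of n] knot_bounds[of n] by (simp add: \<delta>_def knot_step_mono)
    then show ?case
      using Suc by (simp add: algebra_simps)
  qed simp
  obtain n where "1 < real n * \<delta>"
    using \<delta> ex_less_of_nat_mult by blast
  then show False
    using linear_decrease[of n] knot_bounds[of n] by linarith
qed

lemma norm_D0_diff_le_on_segment:
  assumes "x \<in> {knot (Suc n)..knot n}" "y \<in> {knot (Suc n)..knot n}"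
  shows "norm (D 0 x - D 0 y) \<le> exp (- 1 / (knot n / 2))"
proof -
  define a where "a = knot n / 2"
  have a: "0 < a" "a \<le> 1"
    using knot_bounds[of n] by (auto simp: a_def)
  have "norm (D 0 x - D 0 y) \<le> deriv_sup a * \<bar>x - y\<bar>"
    using assms half_knot_le_knot_Suc[of n] knot_bounds[of n]
    by (intro norm_D0_diff_le[OF a(1)]) (auto simp: a_def)
  also have "\<dots> \<le> deriv_sup a * knot_step a"
    using assms deriv_sup_nonneg[OF a] by (intro mult_left_mono) (auto simp: a_def)
  also have "\<dots> \<le> exp (- 1 / a)"
    using a by (rule mult_knot_step_le)
  finally show ?thesis
    by (simp add: a_def)
qed

definition knot_sign :: "nat \<Rightarrow> 'a" where
  "knot_sign n = inverse (sgn (D 0 (knot n)))"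

definition segment_length :: "nat \<Rightarrow> real" where
  "segment_length n = knot n - knot (Suc n)"

lemma segment_length_pos: "0 < segment_length n"
  using knot_Suc_less[of n] by (simp add: segment_length_def)

text \<open>For \<open>k = 0\<close> this moves from \<open>c\<^sub>n\<^sub>+\<^sub>1 - c\<^sub>n\<close> (left of \<open>t\<^sub>n\<^sub>+\<^sub>1\<close>) to \<open>0\<close> (right of
  \<open>t\<^sub>n\<close>), where \<open>c\<^sub>n\<close> is \<open>knot_sign n\<close>, so the sums below telescope; the higher \<open>k\<close> are its
  derivatives.\<close>

definition transition :: "nat \<Rightarrow> nat \<Rightarrow> real \<Rightarrow> 'a" where
  "transition k n e =
     ((1 / segment_length n) ^ k * smooth_step_deriv k ((e - knot (Suc n)) / segment_length n)
       - (if k = 0 then 1 else 0)) *\<^sub>R (knot_sign n - knot_sign (Suc n))"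

lemma has_vector_derivative_transition:
  "(transition k n has_vector_derivative transition (Suc k) n e) (at e)"
proof -
  let ?h = "segment_length n"
  have "((\<lambda>e. (e - knot (Suc n)) / ?h) has_real_derivative 1 / ?h) (at e)"
    using DERIV_cdivide[OF DERIV_diff[OF DERIV_ident DERIV_const[of "knot (Suc n)"]], of ?h] by simp
  from DERIV_chain2[OF has_real_derivative_smooth_step_deriv[of k] this]
  have inner: "((\<lambda>e. smooth_step_deriv k ((e - knot (Suc n)) / ?h)) has_real_derivative
      smooth_step_deriv (Suc k) ((e - knot (Suc n)) / ?h) * (1 / ?h)) (at e)" .
  have "((\<lambda>e. (1 / ?h) ^ k * smooth_step_deriv k ((e - knot (Suc n)) / ?h)
        - (if k = 0 then 1 else 0)) has_real_derivative
      (1 / ?h) ^ k * (smooth_step_deriv (Suc k) ((e - knot (Suc n)) / ?h) * (1 / ?h))) (at e)"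
    using DERIV_diff[OF DERIV_cmult[OF inner, of "(1 / ?h) ^ k"] DERIV_const] by simp
  from has_vector_derivative_scaleR[OF this has_vector_derivative_const]
  have "(transition k n has_vector_derivative
      ((1 / ?h) ^ k * (smooth_step_deriv (Suc k) ((e - knot (Suc n)) / ?h) * (1 / ?h))) *\<^sub>R
        (knot_sign n - knot_sign (Suc n))) (at e)"
    unfolding transition_def by (simp only: scaleR_zero_right add_0_left)
  moreover have "transition (Suc k) n e =
      ((1 / ?h) ^ k * (smooth_step_deriv (Suc k) ((e - knot (Suc n)) / ?h) * (1 / ?h))) *\<^sub>R
        (knot_sign n - knot_sign (Suc n))"
    unfolding transition_def by (simp only: power_Suc mult_ac nat.distinct if_False diff_0_right)
  ultimately show ?thesis
    by simp
qed

lemma transition_right: "knot n \<le> e \<Longrightarrow> transition k n e = 0"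
proof -
  assume e: "knot n \<le> e"
  have "1 \<le> (e - knot (Suc n)) / segment_length n"
    using e segment_length_pos[of n] by (simp add: segment_length_def field_simps)
  then show ?thesis
    unfolding transition_def using smooth_step_ge_1 smooth_step_deriv_outside[of k] by (cases k) auto
qed

lemma transition_0_left: "e \<le> knot (Suc n) \<Longrightarrow> transition 0 n e = knot_sign (Suc n) - knot_sign n"
proof -
  assume e: "e \<le> knot (Suc n)"
  have "(e - knot (Suc n)) / segment_length n \<le> 0"
    using e segment_length_pos[of n] by (simp add: divide_nonpos_pos)
  then show ?thesis
    unfolding transition_def using smooth_step_nonpos by simp
qed

definition segment_index :: "real \<Rightarrow> nat" where
  "segment_index e = (LEAST n. knot n < e)"

lemma knot_segment_index_less: "0 < e \<Longrightarrow> knot (segment_index e) < e"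
  unfolding segment_index_def using ex_knot_less by (rule LeastI_ex)

lemma segment_index_le: "knot n < e \<Longrightarrow> segment_index e \<le> n"
  unfolding segment_index_def by (rule Least_le)

lemma le_knot_if_less_segment_index: "n < segment_index e \<Longrightarrow> e \<le> knot n"
  using not_less_Least[of n "\<lambda>n. knot n < e"] by (simp add: segment_index_def not_less)

text \<open>Near each \<open>\<epsilon> > 0\<close> only finitely many transitions are nonzero, so \<open>sign_approx 0\<close> is
  smooth with derivatives \<open>sign_approx k\<close>.\<close>

definition sign_approx :: "nat \<Rightarrow> real \<Rightarrow> 'a" where
  "sign_approx k e = (if k = 0 then knot_sign 0 else 0) + (\<Sum>n<segment_index e. transition k n e)"

lemma sign_approx_eq_sum:
  assumes "knot m < e"
  shows "sign_approx k e = (if k = 0 then knot_sign 0 else 0) + (\<Sum>n<m. transition k n e)"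
proof -
  have "(\<Sum>n<segment_index e. transition k n e) = (\<Sum>n<m. transition k n e)"
  proof (rule sum.mono_neutral_left)
    show "\<forall>n\<in>{..<m} - {..<segment_index e}. transition k n e = 0"
    proof
      fix n
      assume "n \<in> {..<m} - {..<segment_index e}"
      then have "knot n \<le> knot (segment_index e)"
        by (intro knot_antimono) auto
      moreover have "knot (segment_index e) < e"
        using assms knot_bounds[of m] by (intro knot_segment_index_less) linarith
      ultimately show "transition k n e = 0"
        by (intro transition_right) linarith
    qed
  qed (use segment_index_le[OF assms] in auto)
  then show ?thesis
    unfolding sign_approx_def by simp
qed

lemma has_vector_derivative_sign_approx:
  assumes e: "e \<in> I_eps"
  shows "(sign_approx k has_vector_derivative sign_approx (Suc k) e) (at e within I_eps)"
proof -
  define m where "m = segment_index e"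
  have m: "knot m < e"
    using e knot_segment_index_less by (simp add: m_def I_eps_def)
  define F where "F = (\<lambda>x. (if k = 0 then knot_sign 0 else 0) + (\<Sum>n<m. transition k n x))"
  have "(F has_vector_derivative 0 + (\<Sum>n<m. transition (Suc k) n e)) (at e)"
    unfolding F_def
    by (intro has_vector_derivative_add has_vector_derivative_const has_vector_derivative_sum
        has_vector_derivative_transition)
  then have "(F has_vector_derivative sign_approx (Suc k) e) (at e within I_eps)"
    using sign_approx_eq_sum[OF m, of "Suc k"] by (simp add: has_vector_derivative_at_within)
  then show ?thesis
  proof (rule has_vector_derivative_transform_within)
    show "0 < e - knot m"
      using m by simp
    fix x
    assume "dist x e < e - knot m"
    then have "knot m < x"
      by (auto simp: dist_real_def)
    then show "F x = sign_approx k x"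
      unfolding F_def using sign_approx_eq_sum by simp
  qed (use e in auto)
qed

lemma sign_approx_0_partial_sum:
  "j \<le> n \<Longrightarrow> e \<le> knot n \<Longrightarrow> knot_sign 0 + (\<Sum>i<j. transition 0 i e) = knot_sign j"
proof (induction j)
  case (Suc j)
  have "knot n \<le> knot (Suc j)"
    using Suc.prems by (intro knot_antimono) simp
  then have "transition 0 j e = knot_sign (Suc j) - knot_sign j"
    using Suc.prems by (intro transition_0_left) linarith
  then show ?case
    using Suc by (simp add: add.assoc[symmetric])
qed simp

lemma sign_approx_0_convex_combination:
  assumes "e \<in> I_eps"
  obtains n l where "knot (Suc n) < e" "e \<le> knot n" "0 \<le> l" "l \<le> 1"
    "sign_approx 0 e = l *\<^sub>R knot_sign n + (1 - l) *\<^sub>R knot_sign (Suc n)"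
proof -
  have e: "0 < e" "e \<le> 1"
    using assms by (auto simp: I_eps_def)
  have "segment_index e \<noteq> 0"
    using knot_segment_index_less[OF e(1)] e(2) by (metis knot.simps(1) not_less)
  then obtain n where n: "segment_index e = Suc n"
    using not0_implies_Suc by blast
  have lo: "knot (Suc n) < e"
    using knot_segment_index_less[OF e(1)] n by simp
  have hi: "e \<le> knot n"
    using le_knot_if_less_segment_index[of n e] n by simp
  define l where "l = smooth_step ((e - knot (Suc n)) / segment_length n)"
  have "sign_approx 0 e = (knot_sign 0 + (\<Sum>i<n. transition 0 i e)) + transition 0 n e"
    unfolding sign_approx_def n by (simp add: add.assoc)
  also have "knot_sign 0 + (\<Sum>i<n. transition 0 i e) = knot_sign n"
    using sign_approx_0_partial_sum[of n n e] hi by simp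
  also have "transition 0 n e = (l - 1) *\<^sub>R (knot_sign n - knot_sign (Suc n))"
    unfolding transition_def l_def by simp
  finally have "sign_approx 0 e = l *\<^sub>R knot_sign n + (1 - l) *\<^sub>R knot_sign (Suc n)"
    by (simp add: algebra_simps)
  then show ?thesis
    using that lo hi smooth_step_bounds by (auto simp: l_def)
qed

lemma norm_sign_approx_0_le: "e \<in> I_eps \<Longrightarrow> norm (sign_approx 0 e) \<le> 1"
  by (elim sign_approx_0_convex_combination)
    (auto simp: knot_sign_def intro!: norm_convex_combination_le norm_inverse_sgn_le)

lemma norm_D0_mult_sign_approx_0_sub_norm_le:
  assumes "e \<in> I_eps"
  shows "norm (D 0 e * sign_approx 0 e - of_real (norm (D 0 e))) \<le> 2 * exp (- 1 / e)"
proof -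
  obtain n l where seg: "knot (Suc n) < e" "e \<le> knot n" and l: "0 \<le> l" "l \<le> 1"
    and z: "sign_approx 0 e = l *\<^sub>R knot_sign n + (1 - l) *\<^sub>R knot_sign (Suc n)"
    using sign_approx_0_convex_combination[OF assms] .
  let ?v = "D 0 e" and ?bound = "2 * exp (- 1 / (knot n / 2))"
  have "norm (?v * knot_sign m - of_real (norm ?v)) \<le> ?bound" if "m \<in> {n, Suc n}" for m
  proof -
    have "norm (?v - D 0 (knot m)) \<le> exp (- 1 / (knot n / 2))"
      using that seg knot_Suc_less[of n] by (intro norm_D0_diff_le_on_segment) auto
    then show ?thesis
      unfolding knot_sign_def using norm_mult_inverse_sgn_sub_norm_le[of ?v "D 0 (knot m)"]
      by linarith
  qed
  moreover have "?v * sign_approx 0 e - of_real (norm ?v) =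
      l *\<^sub>R (?v * knot_sign n - of_real (norm ?v)) + (1 - l) *\<^sub>R (?v * knot_sign (Suc n) - of_real (norm ?v))"
    unfolding z by (simp add: algebra_simps)
  ultimately have "norm (?v * sign_approx 0 e - of_real (norm ?v)) \<le> ?bound"
    using l by (simp add: norm_convex_combination_le)
  also have "\<dots> \<le> 2 * exp (- 1 / e)"
    using exp_neg_inverse_mono[of "knot n / 2" e] knot_bounds[of n] half_knot_le_knot_Suc[of n] seg
    by simp
  finally show ?thesis .
qed

end

lemma smooth_net_sign_approximation:
  fixes r :: "real \<Rightarrow> 'a::real_normed_field"
  assumes "smooth_net r"
  obtains z where "smooth_net z"
    "\<And>e. e \<in> I_eps \<Longrightarrow> norm (z e) \<le> 1"
    "\<And>e. e \<in> I_eps \<Longrightarrow> norm (r e * z e - of_real (norm (r e))) \<le> 2 * exp (- 1 / e)"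
proof -
  obtain D :: "nat \<Rightarrow> real \<Rightarrow> 'a" where D0: "\<forall>t\<in>I_eps. D 0 t = r t"
    and D: "\<forall>k. \<forall>t\<in>I_eps. (D k has_vector_derivative D (Suc k) t) (at t within I_eps)"
    using assms unfolding smooth_net_def by blast
  interpret smooth_derivs D
    using D by unfold_locales blast
  have "smooth_net (sign_approx 0)"
    unfolding smooth_net_def using has_vector_derivative_sign_approx by blast
  then show ?thesis
    using that norm_sign_approx_0_le norm_D0_mult_sign_approx_0_sub_norm_le D0 by simp
qed

section \<open>Generalized numbers\<close>

lemma negligible_net_add:
  assumes "negligible_net f" "negligible_net g"
  shows "negligible_net (\<lambda>e. f e + g e)"
  unfolding negligible_net_def
proof
  fix m
  obtain C1 e1 where e1: "e1 > 0" and f: "\<forall>e\<in>{0<..e1}. e \<le> 1 \<longrightarrow> norm (f e) \<le> C1 * e ^ m"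
    using assms(1) unfolding negligible_net_def by blast
  obtain C2 e2 where e2: "e2 > 0" and g: "\<forall>e\<in>{0<..e2}. e \<le> 1 \<longrightarrow> norm (g e) \<le> C2 * e ^ m"
    using assms(2) unfolding negligible_net_def by blast
  have "norm (f e + g e) \<le> (C1 + C2) * e ^ m" if "e \<in> {0<..min e1 e2}" "e \<le> 1" for e
    using norm_triangle_ineq[of "f e" "g e"] f[rule_format, of e] g[rule_format, of e] that
    by (auto simp: algebra_simps)
  then show "\<exists>C. \<exists>e0>0. \<forall>e\<in>{0<..e0}. e \<le> 1 \<longrightarrow> norm (f e + g e) \<le> C * e ^ m"
    using e1 e2 by (intro exI[of _ "C1 + C2"] exI[of _ "min e1 e2"]) auto
qed

lemma negligible_net_uminus: "negligible_net f \<Longrightarrow> negligible_net (\<lambda>e. - f e)"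
  unfolding negligible_net_def by simp

lemma negligible_net_zero: "negligible_net (\<lambda>e. 0)"
  unfolding negligible_net_def by (intro allI exI[of _ 0] exI[of _ 1]) auto

lemma negligible_net_mult_moderate:
  fixes r :: "real \<Rightarrow> 'a::real_normed_field"
  assumes "moderate_net r" "negligible_net n"
  shows "negligible_net (\<lambda>e. r e * n e)"
  unfolding negligible_net_def
proof
  fix m
  obtain N C e0 where e0: "e0 > 0" and r: "\<forall>e\<in>{0<..e0}. e \<le> 1 \<longrightarrow> norm (r e) \<le> C * (1 / e) ^ N"
    using assms(1) unfolding moderate_net_def by blast
  obtain C' e1 where e1: "e1 > 0" and n: "\<forall>e\<in>{0<..e1}. e \<le> 1 \<longrightarrow> norm (n e) \<le> C' * e ^ (m + N)"
    using assms(2) unfolding negligible_net_def by blast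
  have "norm (r e * n e) \<le> C * C' * e ^ m" if e: "e \<in> {0<..min e0 e1}" "e \<le> 1" for e
  proof -
    have "norm (r e * n e) \<le> (C * (1 / e) ^ N) * (C' * e ^ (m + N))"
      unfolding norm_mult using r n e by (intro mult_mono) (auto intro: order_trans[OF norm_ge_zero])
    also have "\<dots> = C * C' * e ^ m"
      using e by (simp add: power_add field_simps)
    finally show ?thesis .
  qed
  then show "\<exists>C. \<exists>e0>0. \<forall>e\<in>{0<..e0}. e \<le> 1 \<longrightarrow> norm (r e * n e) \<le> C * e ^ m"
    using e0 e1 by (intro exI[of _ "C * C'"] exI[of _ "min e0 e1"]) auto
qed

lemma negligible_netI_exp_neg_inverse:
  assumes "\<And>e. e \<in> I_eps \<Longrightarrow> norm (f e) \<le> C * exp (- 1 / e)"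
  shows "negligible_net f"
  unfolding negligible_net_def
proof
  fix m
  have "norm (f e) \<le> \<bar>C\<bar> * fact m * e ^ m" if "e \<in> {0<..1}" for e
  proof -
    have "norm (f e) \<le> \<bar>C\<bar> * exp (- 1 / e)"
      using assms[of e] that abs_ge_self[of C] by (simp add: I_eps_def)
        (meson exp_ge_zero mult_right_mono order_trans)
    also have "\<dots> \<le> \<bar>C\<bar> * (fact m * e ^ m)"
      using that exp_neg_inverse_le_power[of e m] by (intro mult_left_mono) auto
    finally show ?thesis
      by (simp add: mult.assoc)
  qed
  then show "\<exists>C. \<exists>e0>0. \<forall>e\<in>{0<..e0}. e \<le> 1 \<longrightarrow> norm (f e) \<le> C * e ^ m"
    by (intro exI[of _ "\<bar>C\<bar> * fact m"] exI[of _ 1]) auto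
qed

lemma moderate_netI_bounded:
  assumes "\<And>e. e \<in> I_eps \<Longrightarrow> norm (f e) \<le> C"
  shows "moderate_net f"
  unfolding moderate_net_def
  using assms by (intro exI[of _ 0] exI[of _ C] exI[of _ 1]) (auto simp: I_eps_def)

lemma smooth_net_continuous_on:
  assumes "smooth_net r"
  shows "continuous_on I_eps r"
proof -
  obtain D where D0: "\<forall>t\<in>I_eps. D 0 t = r t"
    and D: "\<forall>k. \<forall>t\<in>I_eps. (D k has_vector_derivative D (Suc k) t) (at t within I_eps)"
    using assms unfolding smooth_net_def by blast
  have "continuous_on I_eps (D 0)"
    unfolding continuous_on_eq_continuous_within using D has_vector_derivative_continuous by blast
  then show ?thesis
    using D0 continuous_on_cong by force
qed

lemma EM_sm_subset_EM_co: "EM_sm \<subseteq> EM_co"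
  by (auto simp: EM_sm_def EM_co_def smooth_net_continuous_on)

lemma norm_in_EM_co:
  fixes r :: "real \<Rightarrow> 'a::real_normed_field"
  assumes "r \<in> EM_sm"
  shows "(\<lambda>e. of_real (norm (r e)) :: 'a) \<in> EM_co"
proof -
  have "continuous_on I_eps r"
    using assms EM_sm_subset_EM_co by (auto simp: EM_co_def)
  then have "continuous_on I_eps (\<lambda>e. of_real (norm (r e)) :: 'a)"
    by (intro continuous_intros)
  moreover have "moderate_net (\<lambda>e. of_real (norm (r e)) :: 'a)"
    using assms by (simp add: EM_sm_def moderate_net_def)
  ultimately show ?thesis
    by (simp add: EM_co_def)
qed

lemma EM_sm_sign_approximation:
  fixes r :: "real \<Rightarrow> 'a::real_normed_field"
  assumes "r \<in> EM_sm"
  obtains z where "z \<in> EM_sm" "negligible_net (\<lambda>e. r e * z e - of_real (norm (r e)))"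
proof -
  obtain z where z: "smooth_net z" and bounded: "\<And>e. e \<in> I_eps \<Longrightarrow> norm (z e) \<le> 1"
    and approx: "\<And>e. e \<in> I_eps \<Longrightarrow> norm (r e * z e - of_real (norm (r e))) \<le> 2 * exp (- 1 / e)"
    using assms smooth_net_sign_approximation unfolding EM_sm_def by blast
  have "z \<in> EM_sm"
    using z moderate_netI_bounded[OF bounded] by (simp add: EM_sm_def)
  moreover have "negligible_net (\<lambda>e. r e * z e - of_real (norm (r e)))"
    using approx by (rule negligible_netI_exp_neg_inverse)
  ultimately show ?thesis
    by (rule that)
qed

lemma negligible_net_diff_commute:
  "negligible_net (\<lambda>e. r e - s e) \<Longrightarrow> negligible_net (\<lambda>e. s e - r e)"
  using negligible_net_uminus[of "\<lambda>e. r e - s e"] by simp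

lemma negligible_net_diff_trans:
  "negligible_net (\<lambda>e. r e - s e) \<Longrightarrow> negligible_net (\<lambda>e. s e - t e) \<Longrightarrow>
    negligible_net (\<lambda>e. r e - t e)"
  using negligible_net_add[of "\<lambda>e. r e - s e" "\<lambda>e. s e - t e"] by simp

lemma equiv_rel_sm: "equiv EM_sm rel_sm"
proof (rule equivI)
  show "rel_sm \<subseteq> EM_sm \<times> EM_sm" "refl_on EM_sm rel_sm"
    by (auto simp: rel_sm_def refl_on_def negligible_net_zero)
  show "sym rel_sm"
    unfolding sym_def rel_sm_def by (auto intro: negligible_net_diff_commute)
  show "trans rel_sm"
    unfolding trans_def rel_sm_def by (auto intro: negligible_net_diff_trans)
qed

lemma equiv_rel_co: "equiv EM_co rel_co"
proof (rule equivI)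
  show "rel_co \<subseteq> EM_co \<times> EM_co" "refl_on EM_co rel_co"
    by (auto simp: rel_co_def refl_on_def negligible_net_zero)
  show "sym rel_co"
    unfolding sym_def rel_co_def by (auto intro: negligible_net_diff_commute)
  show "trans rel_co"
    unfolding trans_def rel_co_def by (auto intro: negligible_net_diff_trans)
qed

lemma rep_in_class:
  assumes "X \<in> EM_sm // rel_sm"
  shows "rep X \<in> X"
proof -
  have "X \<noteq> {}"
    using assms equiv_rel_sm by (auto elim!: quotientE dest: equiv_class_self)
  then obtain r where "r \<in> X"
    by blast
  then show ?thesis
    unfolding rep_def by (rule someI[where P = "\<lambda>r. r \<in> X"])
qed

lemma rel_sm_rep_cls_sm:
  "cls_sm r \<in> carrier Ksm \<Longrightarrow> (r, rep (cls_sm r)) \<in> rel_sm"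
  using rep_in_class[of "cls_sm r"] by (simp add: Ksm_def cls_sm_def)

lemma rep_Ksm:
  assumes "X \<in> carrier Ksm"
  shows "rep X \<in> EM_sm" "cls_sm (rep X) = X"
proof -
  obtain r where r: "X = cls_sm r"
    using assms by (auto simp: Ksm_def cls_sm_def elim: quotientE)
  then have "(r, rep X) \<in> rel_sm"
    using assms rel_sm_rep_cls_sm by blast
  then show "rep X \<in> EM_sm" "cls_sm (rep X) = X"
    using r equiv_class_eq[OF equiv_rel_sm, of r "rep X"] by (auto simp: rel_sm_def cls_sm_def)
qed

lemma cls_sm_in_carrier: "r \<in> EM_sm \<Longrightarrow> cls_sm r \<in> carrier Ksm"
  by (simp add: Ksm_def cls_sm_def quotientI)

lemma negligible_rep_mult_Ksm:
  assumes "X \<otimes>\<^bsub>Ksm\<^esub> Y \<in> carrier Ksm"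
  shows "negligible_net (\<lambda>e. rep (X \<otimes>\<^bsub>Ksm\<^esub> Y) e - rep X e * rep Y e)"
proof -
  have "X \<otimes>\<^bsub>Ksm\<^esub> Y = cls_sm (\<lambda>e. rep X e * rep Y e)"
    by (simp add: Ksm_def)
  then show ?thesis
    using assms rel_sm_rep_cls_sm[of "\<lambda>e. rep X e * rep Y e"]
    by (simp add: rel_sm_def negligible_net_diff_commute)
qed

lemma inj_on_tau_sm: "inj_on tau_sm (carrier Ksm)"
proof (rule inj_onI)
  fix X Y
  assume X: "X \<in> carrier Ksm" and Y: "Y \<in> carrier Ksm" and "tau_sm X = tau_sm Y"
  then have "rel_co `` {rep X} = rel_co `` {rep Y}"
    by (simp add: tau_sm_def cls_co_def)
  moreover have "rep X \<in> EM_co" "rep Y \<in> EM_co"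
    using rep_Ksm(1)[OF X] rep_Ksm(1)[OF Y] EM_sm_subset_EM_co by auto
  ultimately have "(rep X, rep Y) \<in> rel_co"
    using eq_equiv_class_iff[OF equiv_rel_co] by blast
  then have "(rep X, rep Y) \<in> rel_sm"
    using rep_Ksm(1)[OF X] rep_Ksm(1)[OF Y] by (simp add: rel_co_def rel_sm_def)
  then have "cls_sm (rep X) = cls_sm (rep Y)"
    unfolding cls_sm_def by (rule equiv_class_eq[OF equiv_rel_sm])
  then show "X = Y"
    using rep_Ksm(2)[OF X] rep_Ksm(2)[OF Y] by simp
qed

lemma abs_sm_eqI:
  fixes x y :: "(real \<Rightarrow> 'a::real_normed_field) set"
  assumes x: "x \<in> carrier Ksm" and y: "y \<in> carrier Ksm"
    and "negligible_net (\<lambda>e. rep y e - of_real (norm (rep x e)))"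
  shows "abs_sm x = y"
proof -
  have "(rep y, \<lambda>e. of_real (norm (rep x e))) \<in> rel_co"
    using assms rep_Ksm(1) EM_sm_subset_EM_co norm_in_EM_co by (auto simp: rel_co_def)
  then have "tau_sm y = cls_co (\<lambda>e. of_real (norm (rep x e)))"
    unfolding tau_sm_def cls_co_def by (rule equiv_class_eq[OF equiv_rel_co])
  then show ?thesis
    unfolding abs_sm_def using y inj_on_tau_sm by (auto intro!: the_equality dest: inj_onD)
qed

theorem lemma4p24:
  fixes J :: "(real \<Rightarrow> 'a::real_normed_field) set set"
    and x :: "(real \<Rightarrow> 'a) set"
  assumes "ideal J Ksm"
    and "x \<in> J"
  shows "abs_sm x \<in> J"
proof -
  interpret ideal J Ksm by fact
  have x: "x \<in> carrier Ksm"
    using assms(2) a_subset by blast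
  let ?r = "rep x"
  obtain z where z: "z \<in> EM_sm" and approx: "negligible_net (\<lambda>e. ?r e * z e - of_real (norm (?r e)))"
    using EM_sm_sign_approximation[OF rep_Ksm(1)[OF x]] .
  define y where "y = x \<otimes>\<^bsub>Ksm\<^esub> cls_sm z"
  have "y \<in> J"
    unfolding y_def using assms(2) cls_sm_in_carrier[OF z] by (rule I_r_closed)
  then have y: "y \<in> carrier Ksm"
    using a_subset by blast
  have "negligible_net (\<lambda>e. rep y e - ?r e * rep (cls_sm z) e)"
    using y unfolding y_def by (rule negligible_rep_mult_Ksm)
  moreover have "negligible_net (\<lambda>e. ?r e * (rep (cls_sm z) e - z e))"
    using rep_Ksm(1)[OF x] rel_sm_rep_cls_sm[OF cls_sm_in_carrier[OF z]]
    by (intro negligible_net_mult_moderate) (auto simp: EM_sm_def rel_sm_def negligible_net_diff_commute)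
  ultimately have "negligible_net (\<lambda>e. (rep y e - ?r e * rep (cls_sm z) e)
      + ?r e * (rep (cls_sm z) e - z e) + (?r e * z e - of_real (norm (?r e))))"
    using approx by (intro negligible_net_add)
  then have "negligible_net (\<lambda>e. rep y e - of_real (norm (?r e)))"
    by (simp add: algebra_simps)
  then have "abs_sm x = y"
    using x y by (intro abs_sm_eqI)
  with \<open>y \<in> J\<close> show ?thesis
    by simp
qed

end
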